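(* Let $G$ and $H$ be connected graphs with no self-loops. Then $G$ and $H$ are strongly disjoint if and only if they are weakly disjoint and exactly one of the two graphs is a tree.
   Context: A weight function on a finite set $U$ is a map $\alpha:U\times U\to\mathbb{R}$ with $\alpha\ge 0$, $\alpha(u,u')=\alpha(u',u)$, and $\sum_{u,u'}\alpha(u,u')=1$; its degree function is $p(u)=\sum_{u'}\alpha(u,u')$. A graph is $G=(U,\alpha)$ with $U$ finite; edges are pairs $(u,u')$ with $\alpha(u,u')>0$; a self-loop is an edge $(u,u)$. $G$ is connected if any two distinct vertices are joined by a path of edges; a tree is a connected graph (viewed as an undirected graph) with no cycles. For graphs $G=(U,\alpha)$, $H=(V,\beta)$ with degree functions $p,q$, a weight joining is a weight function $\gamma$ on $U\times V$ whose degree function $r(u,v)=\sum_{(u',v')}\gamma((u,v),(u',v'))$ satisfies (a) $\sum_v r(u,v)=p(u)$, $\sum_u r(u,v)=q(v)$, and (b) $p(u)\sum_{\tilde v}\gamma((u,v),(u',\tilde v))=\alpha(u,u')r(u,v)$ and $q(v)\sum_{\tilde u}\gamma((u,v),(\tilde u,v'))=\beta(v,v')r(u,v)$ for all $u,u',v,v'$. A graph joining is $K=(U\times V,\gamma)$ with $\gamma$ a weight joining; $\mathcal{J}(G,H)$ is the set of graph joinings. The tensor product is $G\otimes H=(U\times V,\alpha\otimes\beta)$ with $(\alpha\otimes\beta)((u,v),(u',v'))=\alpha(u,u')\beta(v,v')$; it always lies in $\mathcal{J}(G,H)$. $G,H$ are strongly disjoint if $\mathcal{J}(G,H)=\{G\otimes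 H\}$, and weakly disjoint if every $K\in\mathcal{J}(G,H)$ has degree function $r(u,v)=p(u)q(v)$. *)

theory Defs
  imports Main "HOL-Analysis.Analysis"
begin

text \<open>A graph G = (U, alpha) with U finite is modelled by a finite type 'a (U = UNIV)
  and a weight function alpha :: 'a => 'a => real.\<close>

definition weight_fun :: "('a::finite \<Rightarrow> 'a \<Rightarrow> real) \<Rightarrow> bool" where
  "weight_fun \<alpha> \<longleftrightarrow> (\<forall>u u'. 0 \<le> \<alpha> u u') \<and> (\<forall>u u'. \<alpha> u u' = \<alpha> u' u)
      \<and> (\<Sum>u\<in>UNIV. \<Sum>u'\<in>UNIV. \<alpha> u u') = 1"

definition deg :: "('a::finite \<Rightarrow> 'a \<Rightarrow> real) \<Rightarrow> 'a \<Rightarrow> real" where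
  "deg \<alpha> u = (\<Sum>u'\<in>UNIV. \<alpha> u u')"

definition edges :: "('a \<Rightarrow> 'a \<Rightarrow> real) \<Rightarrow> ('a \<times> 'a) set" where
  "edges \<alpha> = {(u, u'). \<alpha> u u' > 0}"

definition no_self_loops :: "('a \<Rightarrow> 'a \<Rightarrow> real) \<Rightarrow> bool" where
  "no_self_loops \<alpha> \<longleftrightarrow> (\<forall>u. (u, u) \<notin> edges \<alpha>)"

definition graph_connected :: "('a \<Rightarrow> 'a \<Rightarrow> real) \<Rightarrow> bool" where
  "graph_connected \<alpha> \<longleftrightarrow> (\<forall>u v. u \<noteq> v \<longrightarrow> (u, v) \<in> (edges \<alpha>)\<^sup>*)"

definition has_cycle :: "('a \<Rightarrow> 'a \<Rightarrow> real) \<Rightarrow> bool" where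
  "has_cycle \<alpha> \<longleftrightarrow> (\<exists>u. (u, u) \<in> edges \<alpha>) \<or>
     (\<exists>vs. length vs \<ge> 3 \<and> distinct vs
        \<and> (\<forall>i. Suc i < length vs \<longrightarrow> (vs ! i, vs ! Suc i) \<in> edges \<alpha>)
        \<and> (last vs, hd vs) \<in> edges \<alpha>)"

definition is_tree :: "('a \<Rightarrow> 'a \<Rightarrow> real) \<Rightarrow> bool" where
  "is_tree \<alpha> \<longleftrightarrow> graph_connected \<alpha> \<and> \<not> has_cycle \<alpha>"

definition weight_joining ::
  "('a::finite \<Rightarrow> 'a \<Rightarrow> real) \<Rightarrow> ('b::finite \<Rightarrow> 'b \<Rightarrow> real)
     \<Rightarrow> ('a \<times> 'b \<Rightarrow> 'a \<times> 'b \<Rightarrow> real) \<Rightarrow> bool" where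
  "weight_joining \<alpha> \<beta> \<gamma> \<longleftrightarrow> weight_fun \<gamma>
     \<and> (\<forall>u. (\<Sum>v\<in>UNIV. deg \<gamma> (u, v)) = deg \<alpha> u)
     \<and> (\<forall>v. (\<Sum>u\<in>UNIV. deg \<gamma> (u, v)) = deg \<beta> v)
     \<and> (\<forall>u u' v. deg \<alpha> u * (\<Sum>v'\<in>UNIV. \<gamma> (u, v) (u', v')) = \<alpha> u u' * deg \<gamma> (u, v))
     \<and> (\<forall>u v v'. deg \<beta> v * (\<Sum>u'\<in>UNIV. \<gamma> (u, v) (u', v')) = \<beta> v v' * deg \<gamma> (u, v))"

definition tensor ::
  "('a \<Rightarrow> 'a \<Rightarrow> real) \<Rightarrow> ('b \<Rightarrow> 'b \<Rightarrow> real) \<Rightarrow> ('a \<times> 'b \<Rightarrow> 'a \<times> 'b \<Rightarrow> real)" where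
  "tensor \<alpha> \<beta> = (\<lambda>(u, v) (u', v'). \<alpha> u u' * \<beta> v v')"

definition strongly_disjoint ::
  "('a::finite \<Rightarrow> 'a \<Rightarrow> real) \<Rightarrow> ('b::finite \<Rightarrow> 'b \<Rightarrow> real) \<Rightarrow> bool" where
  "strongly_disjoint \<alpha> \<beta> \<longleftrightarrow> {\<gamma>. weight_joining \<alpha> \<beta> \<gamma>} = {tensor \<alpha> \<beta>}"

definition weakly_disjoint ::
  "('a::finite \<Rightarrow> 'a \<Rightarrow> real) \<Rightarrow> ('b::finite \<Rightarrow> 'b \<Rightarrow> real) \<Rightarrow> bool" where
  "weakly_disjoint \<alpha> \<beta> \<longleftrightarrow> (\<forall>\<gamma>. weight_joining \<alpha> \<beta> \<gamma> \<longrightarrow>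
     (\<forall>u v. deg \<gamma> (u, v) = deg \<alpha> u * deg \<beta> v))"

end

theory Submission
  imports Defs
begin

text \<open>If neither graph is a tree, both contain a cycle and hence carry a nonzero circulation;
  adding a small multiple of the tensor product of the two circulations to \<open>\<alpha> \<otimes> \<beta>\<close>
  gives a second joining.  If both are trees, both are bipartite, and joining only vertices
  of matching colours (with doubled weight) gives a second joining.  Conversely, if a
  joining has the product degrees, then its conditional marginals are those of \<open>\<alpha> \<otimes> \<beta>\<close>, so
  for fixed vertices of one factor its difference from \<open>\<alpha> \<otimes> \<beta>\<close> is a matrix supported on
  the edges of the other factor with vanishing row and column sums.  Following its support
  never needs to backtrack, so by finiteness it runs around a cycle; on a tree the
  difference therefore vanishes.\<close>

lemma sum_UNIV_pair:
  fixes f :: "'a::finite \<times> 'b::finite \<Rightarrow> 'c::comm_monoid_add"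
  shows "(\<Sum>x\<in>UNIV. f x) = (\<Sum>a\<in>UNIV. \<Sum>b\<in>UNIV. f (a, b))"
  by (simp add: UNIV_Times_UNIV[symmetric] sum.cartesian_product del: UNIV_Times_UNIV)

lemma weight_fun_nonneg: "weight_fun \<alpha> \<Longrightarrow> 0 \<le> \<alpha> x y"
  by (simp add: weight_fun_def)

lemma weight_fun_sym: "weight_fun \<alpha> \<Longrightarrow> \<alpha> x y = \<alpha> y x"
  by (simp add: weight_fun_def)

lemma weight_fun_sum_deg: "weight_fun \<alpha> \<Longrightarrow> (\<Sum>u\<in>UNIV. deg \<alpha> u) = 1"
  by (simp add: weight_fun_def deg_def)

lemma sym_edges: "weight_fun \<alpha> \<Longrightarrow> sym (edges \<alpha>)"
  by (auto simp: sym_def edges_def weight_fun_sym)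

lemma edges_iff_nonzero: "weight_fun \<alpha> \<Longrightarrow> (u, u') \<in> edges \<alpha> \<longleftrightarrow> \<alpha> u u' \<noteq> 0"
  using weight_fun_nonneg[of \<alpha> u u'] by (auto simp: edges_def)

lemma deg_eq_0_iff: "weight_fun \<alpha> \<Longrightarrow> deg \<alpha> u = 0 \<longleftrightarrow> (\<forall>u'. \<alpha> u u' = 0)"
  unfolding deg_def by (simp add: sum_nonneg_eq_0_iff weight_fun_nonneg)

lemma weight_fun_has_edge:
  assumes "weight_fun \<alpha>"
  obtains u u' where "(u, u') \<in> edges \<alpha>"
proof -
  have "\<exists>u. deg \<alpha> u \<noteq> 0"
    using weight_fun_sum_deg[OF assms] by (metis (mono_tags) sum.neutral zero_neq_one)
  then show ?thesis
    using that deg_eq_0_iff[OF assms] edges_iff_nonzero[OF assms] by blast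
qed

definition closed_path :: "('a \<times> 'a) set \<Rightarrow> (nat \<Rightarrow> 'a) \<Rightarrow> nat \<Rightarrow> bool" where
  "closed_path E f k \<longleftrightarrow> inj_on f {..<k} \<and> f k = f 0 \<and> (\<forall>i<k. (f i, f (Suc i)) \<in> E)"

lemma has_cycle_iff_closed_path:
  "has_cycle \<alpha> \<longleftrightarrow> (\<exists>u. (u, u) \<in> edges \<alpha>) \<or> (\<exists>f k. 3 \<le> k \<and> closed_path (edges \<alpha>) f k)"
proof
  assume "has_cycle \<alpha>"
  moreover have "\<exists>f k. 3 \<le> k \<and> closed_path (edges \<alpha>) f k"
    if cycle: "3 \<le> length vs" "distinct vs"
      "\<forall>i. Suc i < length vs \<longrightarrow> (vs ! i, vs ! Suc i) \<in> edges \<alpha>" "(last vs, hd vs) \<in> edges \<alpha>"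
    for vs :: "'a list"
  proof (intro exI conjI)
    let ?k = "length vs"
    let ?f = "\<lambda>i. vs ! (i mod ?k)"
    have "(?f i, ?f (Suc i)) \<in> edges \<alpha>" if "i < ?k" for i
    proof (cases "Suc i < ?k")
      case True
      then show ?thesis using cycle(3) by simp
    next
      case False
      with that have "Suc i = ?k" by simp
      moreover from this have "i = ?k - 1" by simp
      moreover have "vs \<noteq> []" using cycle(1) by auto
      ultimately show ?thesis using cycle(4) by (simp add: last_conv_nth hd_conv_nth)
    qed
    then show "closed_path (edges \<alpha>) ?f ?k"
      using cycle(2) by (auto simp: closed_path_def inj_on_def nth_eq_iff_index_eq)
  qed (use cycle in simp)
  ultimately show "(\<exists>u. (u, u) \<in> edges \<alpha>) \<or> (\<exists>f k. 3 \<le> k \<and> closed_path (edges \<alpha>) f k)"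
    unfolding has_cycle_def by blast
next
  have "has_cycle \<alpha>" if "3 \<le> k" "closed_path (edges \<alpha>) f k" for f k
  proof -
    let ?vs = "map f [0..<k]"
    have "k - 1 < k" using that(1) by simp
    then have "(f (k - 1), f (Suc (k - 1))) \<in> edges \<alpha>"
      using that(2) unfolding closed_path_def by blast
    then have "(last ?vs, hd ?vs) \<in> edges \<alpha>"
      using that by (simp add: last_map hd_map closed_path_def)
    moreover have "distinct ?vs"
      using that(2) by (simp add: closed_path_def distinct_map atLeast0LessThan)
    ultimately show ?thesis
      using that unfolding has_cycle_def closed_path_def by (intro disjI2 exI[of _ ?vs]) auto
  qed
  then show "(\<exists>u. (u, u) \<in> edges \<alpha>) \<or> (\<exists>f k. 3 \<le> k \<and> closed_path (edges \<alpha>) f k) \<Longrightarrow> has_cycle \<alpha>"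
    unfolding has_cycle_def by blast
qed

lemma closed_path_has_cycle:
  assumes "closed_path (edges \<alpha>) f k" and "k \<noteq> 0" and "k \<noteq> 2"
  shows "has_cycle \<alpha>"
proof (cases "k = 1")
  case True
  then have "(f 0, f 0) \<in> edges \<alpha>" using assms(1) by (auto simp: closed_path_def)
  then show ?thesis by (auto simp: has_cycle_iff_closed_path)
next
  case False
  then show ?thesis using assms by (auto simp: has_cycle_iff_closed_path)
qed

lemma nonbacktracking_walk_has_cycle:
  fixes x :: "nat \<Rightarrow> 'a::finite"
  assumes walk: "\<And>n. (x n, x (Suc n)) \<in> edges \<alpha>"
    and nonbacktracking: "\<And>n. x (Suc (Suc n)) \<noteq> x n"
  shows "has_cycle \<alpha>"
proof -
  define returns where "returns d \<longleftrightarrow> 0 < d \<and> (\<exists>i. x (i + d) = x i)" for d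
  have "\<not> inj x"
    using finite_imageD[of x UNIV] by auto
  then obtain i j where "i < j" "x i = x j"
    unfolding inj_def by (metis linorder_neqE_nat)
  then have "returns (j - i)" by (auto simp: returns_def intro: exI[of _ i])
  define k where "k = (LEAST d. returns d)"
  have "returns k" unfolding k_def by (rule LeastI) fact
  then obtain i0 where "0 < k" "x (i0 + k) = x i0" by (auto simp: returns_def)
  have "inj_on (\<lambda>t. x (i0 + t)) {..<k}"
  proof (rule linorder_inj_onI)
    fix a b assume "a < b" "b \<in> {..<k}"
    then have "\<not> returns (b - a)"
      unfolding k_def using not_less_Least[of "b - a" returns] by simp
    with \<open>a < b\<close> have "x (i0 + a + (b - a)) \<noteq> x (i0 + a)"
      unfolding returns_def by (metis zero_less_diff)
    with \<open>a < b\<close> show "x (i0 + a) \<noteq> x (i0 + b)"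
      by simp
  qed auto
  then have "closed_path (edges \<alpha>) (\<lambda>t. x (i0 + t)) k"
    using \<open>x (i0 + k) = x i0\<close> walk by (simp add: closed_path_def)
  moreover have "k \<noteq> 2"
    using \<open>x (i0 + k) = x i0\<close> nonbacktracking[of i0] by (auto simp: numeral_2_eq_2)
  ultimately show ?thesis
    using \<open>0 < k\<close> closed_path_has_cycle by blast
qed

text \<open>A set of darts (oriented edges) in which every dart can be continued without
  backtracking carries an infinite non-backtracking walk.\<close>

lemma nonbacktracking_darts_has_cycle:
  fixes D :: "('a::finite \<times> 'a) set"
  assumes "D \<subseteq> edges \<alpha>" and "d \<in> D"
    and continue: "\<And>a b. (a, b) \<in> D \<Longrightarrow> \<exists>c. (b, c) \<in> D \<and> c \<noteq> a"
  shows "has_cycle \<alpha>"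
proof -
  have "\<forall>p\<in>D. \<exists>q\<in>D. fst q = snd p \<and> snd q \<noteq> fst p"
    using continue by (metis prod.collapse fst_conv snd_conv)
  then obtain next_dart where next_dart: "\<forall>p\<in>D.
      next_dart p \<in> D \<and> fst (next_dart p) = snd p \<and> snd (next_dart p) \<noteq> fst p"
    by metis
  define w where "w n = (next_dart ^^ n) d" for n
  have w_D: "w n \<in> D" for n
    by (induction n) (auto simp: w_def \<open>d \<in> D\<close> next_dart)
  have w_Suc: "w (Suc n) = next_dart (w n)" for n
    by (simp add: w_def)
  have fst_w: "fst (w (Suc n)) = snd (w n)" and snd_w: "snd (w (Suc n)) \<noteq> fst (w n)" for n
    using next_dart w_D[of n] by (simp_all add: w_Suc)
  show ?thesis
  proof (rule nonbacktracking_walk_has_cycle)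
    show "(fst (w n), fst (w (Suc n))) \<in> edges \<alpha>" for n
      using w_D[of n] \<open>D \<subseteq> edges \<alpha>\<close> by (auto simp: fst_w)
    show "fst (w (Suc (Suc n))) \<noteq> fst (w n)" for n
      using snd_w[of n] by (simp add: fst_w)
  qed
qed

lemma sum_eq_0_other_nonzero:
  fixes f :: "'a::finite \<Rightarrow> real"
  assumes "(\<Sum>z\<in>UNIV. f z) = 0" and "f x \<noteq> 0"
  obtains z where "z \<noteq> x" and "f z \<noteq> 0"
proof -
  have "(\<Sum>z\<in>UNIV - {x}. f z) \<noteq> 0"
    using assms by (simp add: sum.remove[of UNIV x f])
  then show ?thesis
    using that sum.neutral[of "UNIV - {x}" f] by blast
qed

text \<open>Following the support of a matrix with vanishing row and column sums, each
  dart can be continued without backtracking.\<close>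

lemma acyclic_balanced_eq_0:
  fixes A :: "'a::finite \<Rightarrow> 'a \<Rightarrow> real"
  assumes "\<not> has_cycle \<alpha>" and "sym (edges \<alpha>)"
    and support: "\<And>x y. A x y \<noteq> 0 \<Longrightarrow> (x, y) \<in> edges \<alpha>"
    and rows: "\<And>x. (\<Sum>y\<in>UNIV. A x y) = 0"
    and columns: "\<And>y. (\<Sum>x\<in>UNIV. A x y) = 0"
  shows "A x y = 0"
proof (rule ccontr)
  assume "A x y \<noteq> 0"
  define D where "D = {(a, b). A a b \<noteq> 0 \<or> A b a \<noteq> 0}"
  have "has_cycle \<alpha>"
  proof (rule nonbacktracking_darts_has_cycle)
    show "D \<subseteq> edges \<alpha>"
      using support \<open>sym (edges \<alpha>)\<close> by (auto simp: D_def dest: symD)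
    show "(x, y) \<in> D" using \<open>A x y \<noteq> 0\<close> by (simp add: D_def)
    fix a b assume "(a, b) \<in> D"
    then consider "A a b \<noteq> 0" | "A b a \<noteq> 0" by (auto simp: D_def)
    then show "\<exists>c. (b, c) \<in> D \<and> c \<noteq> a"
    proof cases
      case 1
      then obtain c where "c \<noteq> a" "A c b \<noteq> 0"
        using sum_eq_0_other_nonzero[OF columns] by metis
      then show ?thesis by (auto simp: D_def)
    next
      case 2
      then obtain c where "c \<noteq> a" "A b c \<noteq> 0"
        using sum_eq_0_other_nonzero[OF rows] by metis
      then show ?thesis by (auto simp: D_def)
    qed
  qed
  with assms(1) show False ..
qed

lemma relpow_sym:
  assumes "sym E" and "(x, y) \<in> E ^^ n"
  shows "(y, x) \<in> E ^^ n"
  using assms(2)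
proof (induction n arbitrary: y)
  case (Suc n)
  then obtain z where "(x, z) \<in> E ^^ n" "(z, y) \<in> E" by (auto elim: relpow_Suc_E)
  then show ?case using Suc.IH \<open>sym E\<close> by (blast intro: relpow_Suc_I2 dest: symD)
qed simp

lemma walk_segment_relpow:
  assumes "\<forall>t<k. (f t, f (Suc t)) \<in> E" and "i \<le> j" and "j \<le> k"
  shows "(f i, f j) \<in> E ^^ (j - i)"
  unfolding relpow_fun_conv using assms by (intro exI[of _ "\<lambda>t. f (i + t)"]) auto

text \<open>A shortest closed walk of odd length is a cycle: at a repeated vertex it splits into
  two shorter closed walks, one of which has odd length.\<close>

lemma odd_closed_walk_has_cycle:
  assumes "odd k" and "(x, x) \<in> edges \<alpha> ^^ k"
  shows "has_cycle \<alpha>"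
  using assms
proof (induction k arbitrary: x rule: less_induct)
  case (less k)
  then obtain f where f: "f 0 = x" "f k = x" and walk: "\<forall>t<k. (f t, f (Suc t)) \<in> edges \<alpha>"
    unfolding relpow_fun_conv by blast
  show ?case
  proof (cases "inj_on f {..<k}")
    case True
    then have "closed_path (edges \<alpha>) f k"
      using f walk by (simp add: closed_path_def)
    moreover have "k \<noteq> 0" "k \<noteq> 2"
      using \<open>odd k\<close> odd_pos by auto
    ultimately show ?thesis
      by (rule closed_path_has_cycle)
  next
    case False
    then obtain i j where "i < j" "j < k" "f i = f j"
      unfolding inj_on_def by (metis lessThan_iff linorder_neqE_nat)
    have inner: "(f j, f j) \<in> edges \<alpha> ^^ (j - i)"
      using walk_segment_relpow[OF walk, of i j] \<open>i < j\<close> \<open>j < k\<close> \<open>f i = f j\<close> by simp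
    have "(x, x) \<in> edges \<alpha> ^^ i O edges \<alpha> ^^ (k - j)"
      using walk_segment_relpow[OF walk, of 0 i] walk_segment_relpow[OF walk, of j k]
        \<open>i < j\<close> \<open>j < k\<close> \<open>f i = f j\<close> f by auto
    then have outer: "(x, x) \<in> edges \<alpha> ^^ (i + (k - j))"
      by (simp only: relpow_add)
    have "(j - i) + (i + (k - j)) = k" and shorter: "j - i < k" "i + (k - j) < k"
      using \<open>i < j\<close> \<open>j < k\<close> by linarith+
    then have "odd (j - i) \<or> odd (i + (k - j))"
      using \<open>odd k\<close> by (metis even_add)
    then show ?thesis
      using less.IH[OF shorter(1) _ inner] less.IH[OF shorter(2) _ outer] by blast
  qed
qed

definition proper_colouring :: "('a \<Rightarrow> 'a \<Rightarrow> real) \<Rightarrow> ('a \<Rightarrow> bool) \<Rightarrow> bool" where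
  "proper_colouring \<alpha> c \<longleftrightarrow> (\<forall>x y. (x, y) \<in> edges \<alpha> \<longrightarrow> c x \<noteq> c y)"

text \<open>Colour each vertex by the parity of the length of some walk to it from a fixed root.\<close>

lemma tree_proper_colouring:
  assumes "sym (edges \<alpha>)" and "graph_connected \<alpha>" and "\<not> has_cycle \<alpha>"
  obtains c where "proper_colouring \<alpha> c"
proof -
  fix r :: 'a
  have "(r, u) \<in> (edges \<alpha>)\<^sup>*" for u
    using \<open>graph_connected \<alpha>\<close> by (cases "r = u") (auto simp: graph_connected_def)
  then have reach: "\<forall>u. \<exists>n. (r, u) \<in> edges \<alpha> ^^ n"
    by (simp add: rtrancl_power)
  from choice[OF reach] obtain len where len: "\<And>u. (r, u) \<in> edges \<alpha> ^^ len u"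
    by blast
  have "even (len u) \<noteq> even (len u')" if "(u, u') \<in> edges \<alpha>" for u u'
  proof
    assume "even (len u) = even (len u')"
    have "(u', u) \<in> edges \<alpha> ^^ len u' O edges \<alpha> ^^ len u"
      using relpow_sym[OF \<open>sym (edges \<alpha>)\<close> len] len by blast
    then have "(u', u) \<in> edges \<alpha> ^^ (len u' + len u)"
      by (simp only: relpow_add)
    then have "(u, u) \<in> edges \<alpha> ^^ Suc (len u' + len u)"
      by (rule relpow_Suc_I2[OF that])
    moreover have "odd (Suc (len u' + len u))"
      using \<open>even (len u) = even (len u')\<close> by simp
    ultimately have "has_cycle \<alpha>"
      by (intro odd_closed_walk_has_cycle)
    with \<open>\<not> has_cycle \<alpha>\<close> show False ..
  qed
  then have "proper_colouring \<alpha> (\<lambda>u. even (len u))"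
    unfolding proper_colouring_def by blast
  then show ?thesis by (rule that)
qed

definition circulation :: "('a::finite \<Rightarrow> 'a \<Rightarrow> real) \<Rightarrow> ('a \<Rightarrow> 'a \<Rightarrow> real) \<Rightarrow> bool" where
  "circulation \<alpha> \<sigma> \<longleftrightarrow> (\<forall>x y. \<sigma> x y \<noteq> 0 \<longrightarrow> (x, y) \<in> edges \<alpha>)
     \<and> (\<forall>x y. \<sigma> y x = - \<sigma> x y) \<and> (\<forall>x. (\<Sum>y\<in>UNIV. \<sigma> x y) = 0)"

lemma circulation_edge: "circulation \<alpha> \<sigma> \<Longrightarrow> \<sigma> x y \<noteq> 0 \<Longrightarrow> (x, y) \<in> edges \<alpha>"
  unfolding circulation_def by blast

lemma circulation_antisym: "circulation \<alpha> \<sigma> \<Longrightarrow> \<sigma> y x = - \<sigma> x y"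
  unfolding circulation_def by blast

lemma circulation_row_sum: "circulation \<alpha> \<sigma> \<Longrightarrow> (\<Sum>y\<in>UNIV. \<sigma> x y) = 0"
  unfolding circulation_def by blast

lemma closed_path_circulation:
  fixes f :: "nat \<Rightarrow> 'a::finite"
  assumes "sym (edges \<alpha>)" and path: "closed_path (edges \<alpha>) f k" and "3 \<le> k"
  defines "\<sigma> \<equiv> \<lambda>x y. \<Sum>i<k. of_bool (x = f i \<and> y = f (Suc i)) - of_bool (y = f i \<and> x = f (Suc i))"
  shows "circulation \<alpha> \<sigma>" and "\<sigma> (f 0) (f 1) = 1"
proof -
  have inj: "inj_on f {..<k}" and "f k = f 0" and walk: "\<forall>i<k. (f i, f (Suc i)) \<in> edges \<alpha>"
    using path by (auto simp: closed_path_def)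
  have "(x, y) \<in> edges \<alpha>" if "\<sigma> x y \<noteq> 0" for x y
  proof -
    obtain i where "i < k"
      and "(of_bool (x = f i \<and> y = f (Suc i)) - of_bool (y = f i \<and> x = f (Suc i)) :: real) \<noteq> 0"
      using \<open>\<sigma> x y \<noteq> 0\<close> unfolding \<sigma>_def by (meson lessThan_iff sum.neutral)
    then have "i < k" "x = f i \<and> y = f (Suc i) \<or> y = f i \<and> x = f (Suc i)"
      by auto
    then show ?thesis
      using walk \<open>sym (edges \<alpha>)\<close> by (auto dest: symD)
  qed
  moreover have "\<sigma> y x = - \<sigma> x y" for x y
    by (simp add: \<sigma>_def sum_negf[symmetric] conj_commute)
  moreover have "(\<Sum>y\<in>UNIV. \<sigma> x y) = 0" for x
  proof -
    have "(\<Sum>y\<in>UNIV. \<sigma> x y)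
        = (\<Sum>i<k. \<Sum>y\<in>UNIV. of_bool (x = f i \<and> y = f (Suc i)) - of_bool (y = f i \<and> x = f (Suc i)))"
      unfolding \<sigma>_def by (rule sum.swap)
    also have "\<dots> = (\<Sum>i<k. of_bool (x = f i) - of_bool (x = f (Suc i)))"
      by (simp add: sum_subtractf of_bool_conj sum_distrib_left[symmetric] sum_distrib_right[symmetric])
    also have "\<dots> = 0"
      using sum_lessThan_telescope'[of "\<lambda>i. of_bool (x = f i) :: real" k] \<open>f k = f 0\<close> by simp
    finally show ?thesis .
  qed
  ultimately show "circulation \<alpha> \<sigma>"
    unfolding circulation_def by blast
  have "\<sigma> (f 0) (f 1) = (\<Sum>i<k. of_bool (i = 0))"
    unfolding \<sigma>_def
  proof (rule sum.cong)
    fix i assume "i \<in> {..<k}"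
    have "f 0 \<noteq> f (Suc 1)" "f 1 \<noteq> f 0"
      using inj_onD[OF inj, of 0 "Suc 1"] inj_onD[OF inj, of 1 0] \<open>3 \<le> k\<close> by auto
    moreover have "f 0 = f i \<longleftrightarrow> i = 0" "f 1 = f i \<longleftrightarrow> i = 1"
      using inj_onD[OF inj, of 0 i] inj_onD[OF inj, of 1 i] \<open>i \<in> {..<k}\<close> \<open>3 \<le> k\<close> by auto
    ultimately show "of_bool (f 0 = f i \<and> f 1 = f (Suc i)) - of_bool (f 1 = f i \<and> f 0 = f (Suc i))
        = (of_bool (i = 0) :: real)"
      by auto
  qed simp
  also have "\<dots> = 1"
    using \<open>3 \<le> k\<close> by simp
  finally show "\<sigma> (f 0) (f 1) = 1" .
qed

lemma has_cycle_circulation: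
  assumes "sym (edges \<alpha>)" and "no_self_loops \<alpha>" and "has_cycle \<alpha>"
  obtains \<sigma> x y where "circulation \<alpha> \<sigma>" and "\<sigma> x y \<noteq> 0"
proof -
  obtain f k where path: "closed_path (edges \<alpha>) f k" and "3 \<le> k"
    using assms(2,3) by (auto simp: has_cycle_iff_closed_path no_self_loops_def)
  note \<sigma> = closed_path_circulation[OF assms(1) path \<open>3 \<le> k\<close>]
  show ?thesis
    using that[OF \<sigma>(1)] \<sigma>(2) by (metis one_neq_zero)
qed

lemma weight_joiningI:
  fixes \<gamma> :: "'a::finite \<times> 'b::finite \<Rightarrow> 'a \<times> 'b \<Rightarrow> real"
  assumes "weight_fun \<alpha>"
    and nonneg: "\<And>x y. 0 \<le> \<gamma> x y" and sym: "\<And>x y. \<gamma> x y = \<gamma> y x"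
    and rows_a: "\<And>u v u'. (\<Sum>v'\<in>UNIV. \<gamma> (u, v) (u', v')) = \<alpha> u u' * f u v"
    and rows_b: "\<And>u v v'. (\<Sum>u'\<in>UNIV. \<gamma> (u, v) (u', v')) = g u v * \<beta> v v'"
    and mass_a: "\<And>u. (\<Sum>v\<in>UNIV. f u v) = 1"
    and mass_b: "\<And>v. (\<Sum>u\<in>UNIV. g u v) = 1"
  shows "weight_joining \<alpha> \<beta> \<gamma>"
proof -
  have deg_a: "deg \<gamma> (u, v) = deg \<alpha> u * f u v" for u v
    by (simp add: deg_def sum_UNIV_pair rows_a sum_distrib_right)
  have deg_b: "deg \<gamma> (u, v) = g u v * deg \<beta> v" for u v
    by (simp add: deg_def sum_UNIV_pair sum.swap[where B = UNIV] rows_b sum_distrib_left)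
  have marg_a: "(\<Sum>v\<in>UNIV. deg \<gamma> (u, v)) = deg \<alpha> u" for u
    by (simp add: deg_a mass_a sum_distrib_left[symmetric])
  have marg_b: "(\<Sum>u\<in>UNIV. deg \<gamma> (u, v)) = deg \<beta> v" for v
    by (simp add: deg_b mass_b sum_distrib_right[symmetric])
  have "(\<Sum>x\<in>UNIV. \<Sum>y\<in>UNIV. \<gamma> x y) = (\<Sum>u\<in>UNIV. \<Sum>v\<in>UNIV. deg \<gamma> (u, v))"
    by (simp add: deg_def sum_UNIV_pair[of "deg \<gamma>", unfolded deg_def])
  also have "\<dots> = 1"
    using weight_fun_sum_deg[OF \<open>weight_fun \<alpha>\<close>] by (simp add: marg_a)
  finally have "weight_fun \<gamma>"
    using nonneg sym by (simp add: weight_fun_def)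
  moreover have "deg \<alpha> u * (\<Sum>v'\<in>UNIV. \<gamma> (u, v) (u', v')) = \<alpha> u u' * deg \<gamma> (u, v)" for u u' v
    by (simp add: rows_a deg_a)
  moreover have "deg \<beta> v * (\<Sum>u'\<in>UNIV. \<gamma> (u, v) (u', v')) = \<beta> v v' * deg \<gamma> (u, v)" for u v v'
    by (simp add: rows_b deg_b)
  ultimately show ?thesis
    unfolding weight_joining_def using marg_a marg_b by blast
qed

lemma deg_tensor: "deg (tensor \<alpha> \<beta>) (u, v) = deg \<alpha> u * deg \<beta> v"
  by (simp add: deg_def tensor_def sum_UNIV_pair sum_product)

lemma tensor_weight_joining:
  assumes "weight_fun \<alpha>" and "weight_fun \<beta>"
  shows "weight_joining \<alpha> \<beta> (tensor \<alpha> \<beta>)"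
proof (rule weight_joiningI[where f = "\<lambda>u v. deg \<beta> v" and g = "\<lambda>u v. deg \<alpha> u"])
  show "0 \<le> tensor \<alpha> \<beta> x y" and "tensor \<alpha> \<beta> x y = tensor \<alpha> \<beta> y x" for x y
    using assms by (auto simp: tensor_def weight_fun_nonneg weight_fun_sym split: prod.splits)
  show "(\<Sum>v'\<in>UNIV. tensor \<alpha> \<beta> (u, v) (u', v')) = \<alpha> u u' * deg \<beta> v" for u v u'
    by (simp add: tensor_def deg_def sum_distrib_left)
  show "(\<Sum>u'\<in>UNIV. tensor \<alpha> \<beta> (u, v) (u', v')) = deg \<alpha> u * \<beta> v v'" for u v v'
    by (simp add: tensor_def deg_def sum_distrib_right)
qed (use assms weight_fun_sum_deg in auto)

lemma small_perturbation_nonneg: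
  fixes A B :: "'a::finite \<Rightarrow> 'b::finite \<Rightarrow> real"
  assumes "\<And>x y. 0 \<le> A x y" and "\<And>x y. B x y \<noteq> 0 \<Longrightarrow> 0 < A x y"
  shows "\<exists>\<epsilon>>0. \<forall>x y. 0 \<le> A x y + \<epsilon> * B x y"
proof -
  have "\<forall>\<^sub>F \<epsilon> in at_right 0. 0 \<le> A x y + \<epsilon> * B x y" for x y
  proof (cases "B x y = 0")
    case True
    then show ?thesis using assms(1) by simp
  next
    case False
    have "((\<lambda>\<epsilon>. A x y + \<epsilon> * B x y) \<longlongrightarrow> A x y + 0 * B x y) (at_right 0)"
      by (intro tendsto_intros)
    then have "\<forall>\<^sub>F \<epsilon> in at_right 0. 0 < A x y + \<epsilon> * B x y"
      using assms(2)[OF False] by (simp add: order_tendstoD(1))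
    then show ?thesis
      by (rule eventually_mono) simp
  qed
  then have "\<forall>\<^sub>F \<epsilon> in at_right 0. 0 < \<epsilon> \<and> (\<forall>x y. 0 \<le> A x y + \<epsilon> * B x y)"
    by (intro eventually_conj eventually_at_right_less eventually_all_finite)
  then show ?thesis
    using eventually_happens'[OF trivial_limit_at_right_real] by blast
qed

text \<open>Since circulations have zero row sums, adding a multiple of their tensor product
  does not change the conditional marginals.\<close>

lemma circulation_perturbed_joining:
  assumes \<alpha>: "weight_fun \<alpha>" and \<beta>: "weight_fun \<beta>"
    and \<sigma>: "circulation \<alpha> \<sigma>" "\<sigma> x0 y0 \<noteq> 0" and \<tau>: "circulation \<beta> \<tau>" "\<tau> x1 y1 \<noteq> 0"
  obtains \<gamma> where "weight_joining \<alpha> \<beta> \<gamma>" and "\<gamma> \<noteq> tensor \<alpha> \<beta>"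
proof -
  let ?\<rho> = "tensor \<sigma> \<tau>"
  have tensor_nonneg: "0 \<le> tensor \<alpha> \<beta> x y" for x y
    using \<alpha> \<beta> by (auto simp: tensor_def weight_fun_nonneg split: prod.splits)
  have tensor_pos: "0 < tensor \<alpha> \<beta> x y" if "?\<rho> x y \<noteq> 0" for x y
    using that circulation_edge[OF \<sigma>(1)] circulation_edge[OF \<tau>(1)]
    by (auto simp: tensor_def edges_def split: prod.splits)
  obtain \<epsilon> where "0 < \<epsilon>" and nonneg: "\<And>x y. 0 \<le> tensor \<alpha> \<beta> x y + \<epsilon> * ?\<rho> x y"
    using small_perturbation_nonneg[of "tensor \<alpha> \<beta>" ?\<rho>, OF tensor_nonneg tensor_pos] by blast
  define \<gamma> where "\<gamma> x y = tensor \<alpha> \<beta> x y + \<epsilon> * ?\<rho> x y" for x y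
  have "weight_joining \<alpha> \<beta> \<gamma>"
  proof (rule weight_joiningI[where f = "\<lambda>u v. deg \<beta> v" and g = "\<lambda>u v. deg \<alpha> u"])
    show "0 \<le> \<gamma> x y" for x y
      using nonneg by (simp add: \<gamma>_def)
    show "\<gamma> x y = \<gamma> y x" for x y
    proof -
      obtain u v u' v' where xy: "x = (u, v)" "y = (u', v')"
        by (cases x, cases y)
      have "?\<rho> y x = ?\<rho> x y"
        using circulation_antisym[OF \<sigma>(1), of u u'] circulation_antisym[OF \<tau>(1), of v v']
        by (simp add: tensor_def xy)
      moreover have "tensor \<alpha> \<beta> y x = tensor \<alpha> \<beta> x y"
        using \<alpha> \<beta> by (simp add: tensor_def xy weight_fun_sym)
      ultimately show ?thesis by (simp add: \<gamma>_def)
    qed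
    show "(\<Sum>v'\<in>UNIV. \<gamma> (u, v) (u', v')) = \<alpha> u u' * deg \<beta> v" for u v u'
      by (simp add: \<gamma>_def tensor_def deg_def sum.distrib sum_distrib_left[symmetric] mult.assoc
          circulation_row_sum[OF \<tau>(1)])
    show "(\<Sum>u'\<in>UNIV. \<gamma> (u, v) (u', v')) = deg \<alpha> u * \<beta> v v'" for u v v'
      by (simp add: \<gamma>_def tensor_def deg_def sum.distrib sum_distrib_left[symmetric]
          sum_distrib_right[symmetric] circulation_row_sum[OF \<sigma>(1)])
  qed (use \<alpha> \<beta> weight_fun_sum_deg in auto)
  moreover have "\<gamma> (x0, x1) (y0, y1) \<noteq> tensor \<alpha> \<beta> (x0, x1) (y0, y1)"
    using \<open>0 < \<epsilon>\<close> \<sigma>(2) \<tau>(2) by (simp add: \<gamma>_def tensor_def)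
  ultimately show ?thesis
    using that by metis
qed

text \<open>Every edge joins the two colour classes, so by symmetry of \<open>\<alpha>\<close> both classes carry the
  same degree mass.\<close>

lemma colour_class_mass:
  assumes "weight_fun \<alpha>" and "proper_colouring \<alpha> c"
  shows "(\<Sum>x\<in>UNIV. if c x = b then deg \<alpha> x else 0) = 1 / 2"
proof -
  define M where "M b = (\<Sum>x\<in>UNIV. \<Sum>y\<in>UNIV. if c x = b \<and> c y \<noteq> b then \<alpha> x y else 0)" for b
  have "\<alpha> x y = 0" if "c x = c y" for x y
    using assms that by (auto simp: proper_colouring_def edges_iff_nonzero)
  then have mass_M: "(\<Sum>x\<in>UNIV. if c x = b then deg \<alpha> x else 0) = M b" for b
    unfolding M_def deg_def by (intro sum.cong refl) (auto intro!: sum.cong)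
  have "M (\<not> b) = (\<Sum>y\<in>UNIV. \<Sum>x\<in>UNIV. if c x \<noteq> b \<and> c y = b then \<alpha> x y else 0)"
    unfolding M_def by (subst sum.swap) (intro sum.cong refl, auto)
  also have "\<dots> = M b"
    unfolding M_def using weight_fun_sym[OF assms(1)] by (intro sum.cong refl) auto
  finally have "M (\<not> b) = M b" .
  moreover have "M b + M (\<not> b) = 1"
    unfolding mass_M[symmetric] sum.distrib[symmetric] weight_fun_sum_deg[OF assms(1), symmetric]
    by (intro sum.cong refl) auto
  ultimately show ?thesis
    using mass_M by simp
qed

lemma proper_colourings_mismatched_edges:
  assumes \<alpha>: "weight_fun \<alpha>" and \<beta>: "weight_fun \<beta>"
    and c\<alpha>: "proper_colouring \<alpha> c\<^sub>\<alpha>" and c\<beta>: "proper_colouring \<beta> c\<^sub>\<beta>"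
  obtains u u' v v' where "(u, u') \<in> edges \<alpha>" and "(v, v') \<in> edges \<beta>" and "c\<^sub>\<alpha> u \<noteq> c\<^sub>\<beta> v"
proof -
  obtain u u' v v' where edges: "(u, u') \<in> edges \<alpha>" "(v, v') \<in> edges \<beta>"
    using weight_fun_has_edge[OF \<alpha>] weight_fun_has_edge[OF \<beta>] by metis
  then have "(u', u) \<in> edges \<alpha>" "c\<^sub>\<alpha> u' \<noteq> c\<^sub>\<alpha> u"
    using sym_edges[OF \<alpha>] c\<alpha> by (auto simp: proper_colouring_def dest: symD)
  then show ?thesis
    using that edges by (cases "c\<^sub>\<alpha> u = c\<^sub>\<beta> v") auto
qed

text \<open>Each edge of either factor changes the colour, so pairs of matching colours are
  joined only to pairs of matching colours.\<close>

lemma bipartite_joining: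
  assumes \<alpha>: "weight_fun \<alpha>" and \<beta>: "weight_fun \<beta>"
    and c\<alpha>: "proper_colouring \<alpha> c\<^sub>\<alpha>" and c\<beta>: "proper_colouring \<beta> c\<^sub>\<beta>"
  obtains \<gamma> where "weight_joining \<alpha> \<beta> \<gamma>" and "\<gamma> \<noteq> tensor \<alpha> \<beta>"
proof -
  define \<gamma> where "\<gamma> = (\<lambda>(u, v) (u', v'). if c\<^sub>\<alpha> u = c\<^sub>\<beta> v then 2 * \<alpha> u u' * \<beta> v v' else 0)"
  have \<gamma>: "\<gamma> (u, v) (u', v') = (if c\<^sub>\<alpha> u = c\<^sub>\<beta> v then 2 * \<alpha> u u' * \<beta> v v' else 0)" for u v u' v'
    by (simp add: \<gamma>_def)
  have "weight_joining \<alpha> \<beta> \<gamma>"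
  proof (rule weight_joiningI[where f = "\<lambda>u v. 2 * (if c\<^sub>\<beta> v = c\<^sub>\<alpha> u then deg \<beta> v else 0)"
        and g = "\<lambda>u v. 2 * (if c\<^sub>\<alpha> u = c\<^sub>\<beta> v then deg \<alpha> u else 0)"])
    show "0 \<le> \<gamma> x y" for x y
      using \<alpha> \<beta> by (auto simp: \<gamma>_def weight_fun_nonneg split: prod.splits)
    show "\<gamma> x y = \<gamma> y x" for x y
    proof -
      obtain u v u' v' where xy: "x = (u, v)" "y = (u', v')"
        by (cases x, cases y)
      show ?thesis
      proof (cases "\<alpha> u u' = 0 \<or> \<beta> v v' = 0")
        case False
        then have "c\<^sub>\<alpha> u \<noteq> c\<^sub>\<alpha> u'" "c\<^sub>\<beta> v \<noteq> c\<^sub>\<beta> v'"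
          using \<alpha> \<beta> c\<alpha> c\<beta> by (auto simp: proper_colouring_def edges_iff_nonzero)
        then show ?thesis
          using \<alpha> \<beta> by (auto simp: xy \<gamma> weight_fun_sym)
      qed (use \<alpha> \<beta> in \<open>auto simp: xy \<gamma> weight_fun_sym\<close>)
    qed
    show "(\<Sum>v'\<in>UNIV. \<gamma> (u, v) (u', v')) =
        \<alpha> u u' * (2 * (if c\<^sub>\<beta> v = c\<^sub>\<alpha> u then deg \<beta> v else 0))" for u v u'
    proof -
      have "(\<Sum>v'\<in>UNIV. \<gamma> (u, v) (u', v')) = (if c\<^sub>\<alpha> u = c\<^sub>\<beta> v then 2 * \<alpha> u u' * deg \<beta> v else 0)"
        by (simp add: \<gamma> deg_def sum_distrib_left)
      then show ?thesis by auto
    qed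
    show "(\<Sum>u'\<in>UNIV. \<gamma> (u, v) (u', v')) =
        2 * (if c\<^sub>\<alpha> u = c\<^sub>\<beta> v then deg \<alpha> u else 0) * \<beta> v v'" for u v v'
      by (simp add: \<gamma> deg_def sum_distrib_left sum_distrib_right mult_ac)
    show "(\<Sum>v\<in>UNIV. 2 * (if c\<^sub>\<beta> v = c\<^sub>\<alpha> u then deg \<beta> v else 0)) = 1" for u
      using colour_class_mass[OF \<beta> c\<beta>, of "c\<^sub>\<alpha> u"] by (simp flip: sum_distrib_left)
    show "(\<Sum>u\<in>UNIV. 2 * (if c\<^sub>\<alpha> u = c\<^sub>\<beta> v then deg \<alpha> u else 0)) = 1" for v
      using colour_class_mass[OF \<alpha> c\<alpha>, of "c\<^sub>\<beta> v"] by (simp flip: sum_distrib_left)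
  qed fact
  moreover obtain u u' v v' where "(u, u') \<in> edges \<alpha>" "(v, v') \<in> edges \<beta>" "c\<^sub>\<alpha> u \<noteq> c\<^sub>\<beta> v"
    by (rule proper_colourings_mismatched_edges[OF \<alpha> \<beta> c\<alpha> c\<beta>])
  then have "\<gamma> (u, v) (u', v') \<noteq> tensor \<alpha> \<beta> (u, v) (u', v')"
    by (simp add: \<gamma> tensor_def edges_def)
  ultimately show ?thesis
    using that by metis
qed

lemma product_degree_joining_rows:
  assumes \<alpha>: "weight_fun \<alpha>" and \<beta>: "weight_fun \<beta>" and joining: "weight_joining \<alpha> \<beta> \<gamma>"
    and product: "\<And>u v. deg \<gamma> (u, v) = deg \<alpha> u * deg \<beta> v"
  shows "(\<Sum>v'\<in>UNIV. \<gamma> (u, v) (u', v')) = \<alpha> u u' * deg \<beta> v"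
    and "(\<Sum>u'\<in>UNIV. \<gamma> (u, v) (u', v')) = deg \<alpha> u * \<beta> v v'"
proof -
  have \<gamma>: "weight_fun \<gamma>"
    using joining by (simp add: weight_joining_def)
  show "(\<Sum>v'\<in>UNIV. \<gamma> (u, v) (u', v')) = \<alpha> u u' * deg \<beta> v"
  proof (cases "deg \<alpha> u = 0")
    case True
    then have "\<alpha> u u' = 0" and "deg \<gamma> (u, v) = 0"
      using deg_eq_0_iff[OF \<alpha>] product by auto
    then show ?thesis
      using deg_eq_0_iff[OF \<gamma>] by simp
  next
    case False
    have "deg \<alpha> u * (\<Sum>v'\<in>UNIV. \<gamma> (u, v) (u', v')) = \<alpha> u u' * deg \<gamma> (u, v)"
      using joining unfolding weight_joining_def by blast
    also have "\<dots> = deg \<alpha> u * (\<alpha> u u' * deg \<beta> v)"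
      by (simp add: product mult.left_commute)
    finally show ?thesis
      using False by simp
  qed
  show "(\<Sum>u'\<in>UNIV. \<gamma> (u, v) (u', v')) = deg \<alpha> u * \<beta> v v'"
  proof (cases "deg \<beta> v = 0")
    case True
    then have "\<beta> v v' = 0" and "deg \<gamma> (u, v) = 0"
      using deg_eq_0_iff[OF \<beta>] product by auto
    then show ?thesis
      using deg_eq_0_iff[OF \<gamma>] by simp
  next
    case False
    have "deg \<beta> v * (\<Sum>u'\<in>UNIV. \<gamma> (u, v) (u', v')) = \<beta> v v' * deg \<gamma> (u, v)"
      using joining unfolding weight_joining_def by blast
    also have "\<dots> = deg \<beta> v * (deg \<alpha> u * \<beta> v v')"
      by (simp add: product mult.commute mult.left_commute)
    finally show ?thesis
      using False by simp
  qed
qed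

text \<open>For fixed \<open>v, v'\<close> the difference between \<open>\<gamma>\<close> and the tensor product is a matrix
  on the vertices of the acyclic factor with vanishing row and column sums.\<close>

lemma acyclic_product_rows_eq_tensor:
  fixes \<gamma> :: "'a::finite \<times> 'b::finite \<Rightarrow> 'a \<times> 'b \<Rightarrow> real"
  assumes \<alpha>: "weight_fun \<alpha>" and "\<not> has_cycle \<alpha>" and \<beta>_sym: "\<And>v v'. \<beta> v v' = \<beta> v' v"
    and nonneg: "\<And>x y. 0 \<le> \<gamma> x y" and sym: "\<And>x y. \<gamma> x y = \<gamma> y x"
    and rows_a: "\<And>u v u'. (\<Sum>v'\<in>UNIV. \<gamma> (u, v) (u', v')) = \<alpha> u u' * q v"
    and rows_b: "\<And>u v v'. (\<Sum>u'\<in>UNIV. \<gamma> (u, v) (u', v')) = deg \<alpha> u * \<beta> v v'"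
  shows "\<gamma> (u, v) (u', v') = \<alpha> u u' * \<beta> v v'"
proof -
  define A where "A x y = \<gamma> (x, v) (y, v') - \<alpha> x y * \<beta> v v'" for x y
  have "A u u' = 0"
  proof (rule acyclic_balanced_eq_0[OF \<open>\<not> has_cycle \<alpha>\<close> sym_edges[OF \<alpha>]])
    show "(x, y) \<in> edges \<alpha>" if "A x y \<noteq> 0" for x y
    proof (rule ccontr)
      assume "(x, y) \<notin> edges \<alpha>"
      then have "\<alpha> x y = 0"
        using edges_iff_nonzero[OF \<alpha>] by blast
      then have "\<gamma> (x, v) (y, v') = 0"
        using rows_a[of x v y] nonneg by (simp add: sum_nonneg_eq_0_iff)
      with \<open>\<alpha> x y = 0\<close> \<open>A x y \<noteq> 0\<close> show False
        by (simp add: A_def)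
    qed
    show "(\<Sum>y\<in>UNIV. A x y) = 0" for x
      by (simp add: A_def sum_subtractf rows_b deg_def sum_distrib_right)
    show "(\<Sum>x\<in>UNIV. A x y) = 0" for y
    proof -
      have "(\<Sum>x\<in>UNIV. \<gamma> (x, v) (y, v')) = deg \<alpha> y * \<beta> v v'"
        using rows_b[of y v' v] by (simp add: sym[of "(_, v)"] \<beta>_sym)
      moreover have "(\<Sum>x\<in>UNIV. \<alpha> x y * \<beta> v v') = deg \<alpha> y * \<beta> v v'"
        using weight_fun_sym[OF \<alpha>] by (simp add: deg_def sum_distrib_right)
      ultimately show ?thesis
        by (simp add: A_def sum_subtractf)
    qed
  qed
  then show ?thesis
    by (simp add: A_def)
qed

lemma product_degree_joining_eq_tensor:
  assumes \<alpha>: "weight_fun \<alpha>" and \<beta>: "weight_fun \<beta>" and joining: "weight_joining \<alpha> \<beta> \<gamma>"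
    and product: "\<And>u v. deg \<gamma> (u, v) = deg \<alpha> u * deg \<beta> v"
    and tree: "is_tree \<alpha> \<or> is_tree \<beta>"
  shows "\<gamma> = tensor \<alpha> \<beta>"
proof -
  have \<gamma>: "weight_fun \<gamma>"
    using joining by (simp add: weight_joining_def)
  note rows = product_degree_joining_rows[OF \<alpha> \<beta> joining product]
  have "\<gamma> (u, v) (u', v') = \<alpha> u u' * \<beta> v v'" for u v u' v'
  proof (cases "is_tree \<alpha>")
    case True
    then show ?thesis
      using acyclic_product_rows_eq_tensor[OF \<alpha> _ weight_fun_sym[OF \<beta>] weight_fun_nonneg[OF \<gamma>]
          weight_fun_sym[OF \<gamma>] rows]
      by (simp add: is_tree_def)
  next
    case False
    let ?\<gamma>' = "\<lambda>x y. \<gamma> (snd x, fst x) (snd y, fst y)"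
    have "?\<gamma>' (v, u) (v', u') = \<beta> v v' * \<alpha> u u'"
    proof (rule acyclic_product_rows_eq_tensor[OF \<beta>, where q = "deg \<alpha>"])
      show "\<not> has_cycle \<beta>"
        using False tree unfolding is_tree_def by blast
      show "\<alpha> x x' = \<alpha> x' x" for x x'
        by (rule weight_fun_sym[OF \<alpha>])
      show "0 \<le> ?\<gamma>' p p'" and "?\<gamma>' p p' = ?\<gamma>' p' p" for p p'
        by (simp_all add: weight_fun_nonneg[OF \<gamma>] weight_fun_sym[OF \<gamma>])
      show "(\<Sum>x'\<in>UNIV. ?\<gamma>' (y, x) (y', x')) = \<beta> y y' * deg \<alpha> x" for y x y'
        by (simp add: rows mult.commute)
      show "(\<Sum>y'\<in>UNIV. ?\<gamma>' (y, x) (y', x')) = deg \<beta> y * \<alpha> x x'" for y x x'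
        by (simp add: rows mult.commute)
    qed
    then show ?thesis
      by (simp add: mult.commute)
  qed
  then show ?thesis
    by (intro ext) (simp add: tensor_def split: prod.splits)
qed

lemma strongly_disjoint_imp_weakly_disjoint:
  assumes "strongly_disjoint \<alpha> \<beta>"
  shows "weakly_disjoint \<alpha> \<beta>"
proof -
  have "\<gamma> = tensor \<alpha> \<beta>" if "weight_joining \<alpha> \<beta> \<gamma>" for \<gamma>
    using assms that unfolding strongly_disjoint_def by blast
  then show ?thesis
    unfolding weakly_disjoint_def by (metis deg_tensor)
qed

lemma strongly_disjoint_imp_one_tree:
  assumes \<alpha>: "weight_fun \<alpha>" "graph_connected \<alpha>" "no_self_loops \<alpha>"
    and \<beta>: "weight_fun \<beta>" "graph_connected \<beta>" "no_self_loops \<beta>"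
    and "strongly_disjoint \<alpha> \<beta>"
  shows "is_tree \<alpha> \<noteq> is_tree \<beta>"
proof
  assume same: "is_tree \<alpha> = is_tree \<beta>"
  have unique: "\<And>\<gamma>. weight_joining \<alpha> \<beta> \<gamma> \<Longrightarrow> \<gamma> = tensor \<alpha> \<beta>"
    using \<open>strongly_disjoint \<alpha> \<beta>\<close> unfolding strongly_disjoint_def by blast
  show False
  proof (cases "is_tree \<alpha>")
    case True
    then have "\<not> has_cycle \<alpha>" "\<not> has_cycle \<beta>"
      using same by (simp_all add: is_tree_def)
    obtain c\<^sub>\<alpha> where c\<alpha>: "proper_colouring \<alpha> c\<^sub>\<alpha>"
      by (rule tree_proper_colouring[OF sym_edges[OF \<alpha>(1)] \<alpha>(2) \<open>\<not> has_cycle \<alpha>\<close>])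
    obtain c\<^sub>\<beta> where c\<beta>: "proper_colouring \<beta> c\<^sub>\<beta>"
      by (rule tree_proper_colouring[OF sym_edges[OF \<beta>(1)] \<beta>(2) \<open>\<not> has_cycle \<beta>\<close>])
    obtain \<gamma> where "weight_joining \<alpha> \<beta> \<gamma>" "\<gamma> \<noteq> tensor \<alpha> \<beta>"
      by (rule bipartite_joining[OF \<alpha>(1) \<beta>(1) c\<alpha> c\<beta>])
    with unique show False by blast
  next
    case False
    then have "has_cycle \<alpha>" "has_cycle \<beta>"
      using same \<alpha>(2) \<beta>(2) by (auto simp: is_tree_def)
    obtain \<sigma> x0 y0 where \<sigma>: "circulation \<alpha> \<sigma>" "\<sigma> x0 y0 \<noteq> 0"
      by (rule has_cycle_circulation[OF sym_edges[OF \<alpha>(1)] \<alpha>(3) \<open>has_cycle \<alpha>\<close>])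
    obtain \<tau> x1 y1 where \<tau>: "circulation \<beta> \<tau>" "\<tau> x1 y1 \<noteq> 0"
      by (rule has_cycle_circulation[OF sym_edges[OF \<beta>(1)] \<beta>(3) \<open>has_cycle \<beta>\<close>])
    obtain \<gamma> where "weight_joining \<alpha> \<beta> \<gamma>" "\<gamma> \<noteq> tensor \<alpha> \<beta>"
      by (rule circulation_perturbed_joining[OF \<alpha>(1) \<beta>(1) \<sigma> \<tau>])
    with unique show False by blast
  qed
qed

theorem theorem5p5:
  fixes \<alpha> :: "'a::finite \<Rightarrow> 'a \<Rightarrow> real" and \<beta> :: "'b::finite \<Rightarrow> 'b \<Rightarrow> real"
  assumes "weight_fun \<alpha>" and "weight_fun \<beta>"
    and "graph_connected \<alpha>" and "graph_connected \<beta>"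
    and "no_self_loops \<alpha>" and "no_self_loops \<beta>"
  shows "strongly_disjoint \<alpha> \<beta> \<longleftrightarrow>
           weakly_disjoint \<alpha> \<beta> \<and> (is_tree \<alpha> \<noteq> is_tree \<beta>)"
proof
  assume "strongly_disjoint \<alpha> \<beta>"
  then show "weakly_disjoint \<alpha> \<beta> \<and> (is_tree \<alpha> \<noteq> is_tree \<beta>)"
    using strongly_disjoint_imp_weakly_disjoint strongly_disjoint_imp_one_tree assms by blast
next
  assume "weakly_disjoint \<alpha> \<beta> \<and> (is_tree \<alpha> \<noteq> is_tree \<beta>)"
  then have "weight_joining \<alpha> \<beta> \<gamma> \<Longrightarrow> \<gamma> = tensor \<alpha> \<beta>" for \<gamma>
    using product_degree_joining_eq_tensor[OF assms(1,2)] unfolding weakly_disjoint_def by blast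
  then show "strongly_disjoint \<alpha> \<beta>"
    using tensor_weight_joining[OF assms(1,2)] unfolding strongly_disjoint_def by blast
qed

end
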